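(* Let $\mathcal W,\mathcal U,\mathcal V$ be finite, $\Phi_W$ a pmf, $\Phi_{U|W}$ a codebook distribution and $\Phi_{V|W,U}$ a memoryless channel. Let $\mathcal B^{(n)}=\{u^n(w^n,j): w^n\in\mathcal W^n, j\in[2^{nR}]\}$ have independent entries, $u^n(w^n,j)\sim\prod_{t=1}^n\Phi_{U|W}(\cdot|w_t)$. Let $W^n\sim\prod\Phi_W$ and $J$ uniform on $[2^{nR}]$ independent of $W^n$; set $U^n=u^n(W^n,J)$ and pass $(W^n,U^n)$ through $\prod\Phi_{V|W,U}$ to obtain $V^n$ with distribution $P_{V^n}$; let $Q_{V^n}=\prod\Phi_V$, where $\Phi_V=\sum_{w,u}\Phi_W\Phi_{U|W}\Phi_{V|W,U}$. If $R>I_\Phi(W,U;V)-H_\Phi(W)$, then $\lim_{n\to\infty}\mathbf E\|P_{V^n}-Q_{V^n}\|_{TV}=0$, and the convergence is exponentially fast in $n$.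
   Context: Expectation over the random codebook; information quantities in bits under $\Phi_W\Phi_{U|W}\Phi_{V|W,U}$. Total variation is half the $\ell_1$ distance. *)

theory Defs
  imports Complex_Main "HOL-Library.FuncSet"
begin

text \<open>Sequences of length n over an alphabet are represented as lists of length n;
  position t (0-based) of a list xs is xs ! t.\<close>

definition seqs :: "nat \<Rightarrow> 'a list set" where
  "seqs n = {xs. length xs = n}"

definition xlog2 :: "real \<Rightarrow> real \<Rightarrow> real" where
  "xlog2 x y = (if x = 0 then 0 else x * log 2 y)"

definition entropy_bits :: "('w::finite \<Rightarrow> real) \<Rightarrow> real" where
  "entropy_bits PW = - (\<Sum>w\<in>UNIV. xlog2 (PW w) (PW w))"

definition out_marg :: "('w::finite \<Rightarrow> real) \<Rightarrow> ('w \<Rightarrow> 'u::finite \<Rightarrow> real)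
    \<Rightarrow> ('w \<Rightarrow> 'u \<Rightarrow> 'v \<Rightarrow> real) \<Rightarrow> 'v \<Rightarrow> real" where
  "out_marg PW PUW PV v = (\<Sum>w\<in>UNIV. \<Sum>u\<in>UNIV. PW w * PUW w u * PV w u v)"

definition mutual_info_WU_V :: "('w::finite \<Rightarrow> real) \<Rightarrow> ('w \<Rightarrow> 'u::finite \<Rightarrow> real)
    \<Rightarrow> ('w \<Rightarrow> 'u \<Rightarrow> 'v::finite \<Rightarrow> real) \<Rightarrow> real" where
  "mutual_info_WU_V PW PUW PV =
     (\<Sum>w\<in>UNIV. \<Sum>u\<in>UNIV. \<Sum>v\<in>UNIV.
        xlog2 (PW w * PUW w u * PV w u v)
              ((PW w * PUW w u * PV w u v) / ((PW w * PUW w u) * out_marg PW PUW PV v)))"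

text \<open>Number of codewords per w^n: [2^{nR}] = {1, ..., ceiling(2^{nR})}.\<close>
definition num_cw :: "real \<Rightarrow> nat \<Rightarrow> nat" where
  "num_cw R n = nat \<lceil>2 powr (real n * R)\<rceil>"

definition codebooks :: "nat \<Rightarrow> nat \<Rightarrow> ('w list \<times> nat \<Rightarrow> 'u list) set" where
  "codebooks n M = PiE (seqs n \<times> {1..M}) (\<lambda>_. seqs n)"

definition codebook_prob :: "('w \<Rightarrow> 'u \<Rightarrow> real) \<Rightarrow> nat \<Rightarrow> nat
    \<Rightarrow> ('w list \<times> nat \<Rightarrow> 'u list) \<Rightarrow> real" where
  "codebook_prob PUW n M c =
     (\<Prod>(ws, j)\<in>seqs n \<times> {1..M}. \<Prod>t<n. PUW (ws ! t) (c (ws, j) ! t))"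

definition induced_out :: "('w \<Rightarrow> real) \<Rightarrow> ('w \<Rightarrow> 'u \<Rightarrow> 'v \<Rightarrow> real) \<Rightarrow> nat \<Rightarrow> nat
    \<Rightarrow> ('w list \<times> nat \<Rightarrow> 'u list) \<Rightarrow> 'v list \<Rightarrow> real" where
  "induced_out PW PV n M c vs =
     (\<Sum>ws\<in>seqs n. (\<Prod>t<n. PW (ws ! t)) *
        ((1 / real M) * (\<Sum>j\<in>{1..M}. \<Prod>t<n. PV (ws ! t) (c (ws, j) ! t) (vs ! t))))"

definition tv_dist :: "nat \<Rightarrow> ('v list \<Rightarrow> real) \<Rightarrow> ('v list \<Rightarrow> real) \<Rightarrow> real" where
  "tv_dist n P Q = (1/2) * (\<Sum>vs\<in>seqs n. \<bar>P vs - Q vs\<bar>)"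

definition expected_tv :: "('w::finite \<Rightarrow> real) \<Rightarrow> ('w \<Rightarrow> 'u::finite \<Rightarrow> real)
    \<Rightarrow> ('w \<Rightarrow> 'u \<Rightarrow> 'v::finite \<Rightarrow> real) \<Rightarrow> real \<Rightarrow> nat \<Rightarrow> real" where
  "expected_tv PW PUW PV R n =
     (let M = num_cw R n in
      \<Sum>c\<in>codebooks n M. codebook_prob PUW n M c *
         tv_dist n (induced_out PW PV n M c)
                   (\<lambda>vs. \<Prod>t<n. out_marg PW PUW PV (vs ! t)))"

end

theory Submission
  imports Defs
begin

(*
  For a fixed output sequence v^n, P(v^n) is a sum over the codebook indices
  (w^n, j) of independent random terms whose total mean is Q(v^n).  Truncating every term
  at level tau Q(v^n) splits |P - Q| into a bounded part, controlled by Cauchy-Schwarz and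
  the vanishing of cross covariances (at most sqrt tau Q), and a tail, controlled by the
  Markov-type bound t <= t (t / (tau Q))^s.  Summed over v^n, the tail factorises letter by
  letter into the n-th power of a single-letter tilted moment g(s), divided by (tau M)^s
  where M >= 2^(nR) is the number of codewords per w^n.  Since g(0) = 1 and
  g'(0) = ln 2 (I(W,U;V) - H(W)), a small s > 0 gives g(s) <= 2^(s (I - H + eps)), and with
  tau = 2^(-n eps) both parts decay exponentially when R > I - H.
*)

lemma finite_seqs [simp]: "finite (seqs n :: 'a::finite list set)"
  unfolding seqs_def using finite_lists_length_eq[of "UNIV :: 'a set" n] by simp

lemma seqs_Suc: "seqs (Suc n) = (\<lambda>(x, xs). x # xs) ` (UNIV \<times> seqs n)"
  unfolding seqs_def by (auto simp: length_Suc_conv)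

lemma sum_seqs_prod:
  fixes f :: "nat \<Rightarrow> 'a::finite \<Rightarrow> 'b::comm_semiring_1"
  shows "(\<Sum>xs\<in>seqs n. \<Prod>t<n. f t (xs ! t)) = (\<Prod>t<n. \<Sum>x\<in>UNIV. f t x)"
proof (induction n arbitrary: f)
  case 0
  then show ?case by (simp add: seqs_def)
next
  case (Suc n)
  have inj: "inj_on (\<lambda>(x, xs). x # xs) (UNIV \<times> seqs n)" by (auto simp: inj_on_def)
  have "(\<Sum>xs\<in>seqs (Suc n). \<Prod>t<Suc n. f t (xs ! t))
      = (\<Sum>(x, xs)\<in>UNIV \<times> seqs n. f 0 x * (\<Prod>t<n. f (Suc t) (xs ! t)))"
    unfolding seqs_Suc sum.reindex[OF inj]
    by (simp add: case_prod_unfold prod.lessThan_Suc_shift del: prod.lessThan_Suc)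
  also have "\<dots> = (\<Sum>x\<in>UNIV. f 0 x * (\<Sum>xs\<in>seqs n. \<Prod>t<n. f (Suc t) (xs ! t)))"
    by (simp add: sum.cartesian_product[symmetric] sum_distrib_left)
  also have "\<dots> = (\<Sum>x\<in>UNIV. f 0 x) * (\<Prod>t<n. \<Sum>x\<in>UNIV. f (Suc t) x)"
    by (simp add: Suc.IH[of "\<lambda>t. f (Suc t)"] sum_distrib_right)
  also have "\<dots> = (\<Prod>t<Suc n. \<Sum>x\<in>UNIV. f t x)"
    by (simp add: prod.lessThan_Suc_shift del: prod.lessThan_Suc)
  finally show ?case .
qed

lemma truncation_tail_le:
  fixes t \<theta> s :: real
  assumes "t \<ge> 0" "\<theta> > 0" "s > 0"
  shows "(if t \<le> \<theta> then 0 else t) \<le> t * (t / \<theta>) powr s"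
proof (cases "t \<le> \<theta>")
  case False
  then have "1 \<le> (t / \<theta>) powr s" using assms by (simp add: ge_one_powr_ge_zero)
  then show ?thesis using False mult_left_mono[of 1 "(t / \<theta>) powr s" t] assms by simp
qed (use assms in simp)

text \<open>Expectation of f(c) for a random function c on K whose values c k \<in> S are independent
  with laws q k; random codebooks are of this form.\<close>
definition prod_expect ::
    "'k set \<Rightarrow> 'x set \<Rightarrow> ('k \<Rightarrow> 'x \<Rightarrow> real) \<Rightarrow> (('k \<Rightarrow> 'x) \<Rightarrow> real) \<Rightarrow> real" where
  "prod_expect K S q f = (\<Sum>c\<in>PiE K (\<lambda>_. S). (\<Prod>k\<in>K. q k (c k)) * f c)"

locale prod_space =
  fixes K :: "'k set" and S :: "'x set" and q :: "'k \<Rightarrow> 'x \<Rightarrow> real"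
  assumes finite_K: "finite K" and finite_S: "finite S"
    and q_nonneg: "\<And>k x. q k x \<ge> 0"
    and q_sum: "\<And>k. k \<in> K \<Longrightarrow> (\<Sum>x\<in>S. q k x) = 1"
begin

abbreviation E :: "(('k \<Rightarrow> 'x) \<Rightarrow> real) \<Rightarrow> real" where "E \<equiv> prod_expect K S q"

lemma E_prod: "E (\<lambda>c. \<Prod>k\<in>K. \<phi> k (c k)) = (\<Prod>k\<in>K. \<Sum>x\<in>S. q k x * \<phi> k x)"
  unfolding prod_expect_def prod.distrib[symmetric]
  using prod_sum_PiE[OF finite_K, of "\<lambda>_. S" "\<lambda>k x. q k x * \<phi> k x"] finite_S by simp

lemma E_const [simp]: "E (\<lambda>_. a) = a"
  using E_prod[of "\<lambda>_ _. 1"] unfolding prod_expect_def by (simp add: q_sum sum_distrib_right[symmetric])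

lemma E_add: "E (\<lambda>c. f c + g c) = E f + E g"
  unfolding prod_expect_def by (simp add: distrib_left sum.distrib)

lemma E_cmult: "E (\<lambda>c. a * f c) = a * E f"
  unfolding prod_expect_def by (simp add: sum_distrib_left algebra_simps)

lemma E_sum: "E (\<lambda>c. \<Sum>i\<in>I. f i c) = (\<Sum>i\<in>I. E (f i))"
  unfolding prod_expect_def by (simp add: sum_distrib_left sum.swap[of _ I])

lemma E_mono: "(\<And>c. f c \<le> g c) \<Longrightarrow> E f \<le> E g"
  unfolding prod_expect_def by (intro sum_mono mult_left_mono) (auto intro: prod_nonneg q_nonneg)

lemma E_single:
  assumes k0: "k0 \<in> K"
  shows "E (\<lambda>c. f (c k0)) = (\<Sum>x\<in>S. q k0 x * f x)"
proof -
  have "E (\<lambda>c. f (c k0)) = (\<Prod>k\<in>K. \<Sum>x\<in>S. q k x * (if k = k0 then f x else 1))"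
    using E_prod[of "\<lambda>k x. if k = k0 then f x else 1"] finite_K k0 by (simp add: prod.If_cases)
  also have "\<dots> = (\<Prod>k\<in>K. if k = k0 then (\<Sum>x\<in>S. q k0 x * f x) else 1)"
    by (rule prod.cong) (simp_all add: q_sum)
  finally show ?thesis using finite_K k0 by simp
qed

lemma E_pair:
  assumes "k0 \<in> K" "k1 \<in> K" "k0 \<noteq> k1"
  shows "E (\<lambda>c. f (c k0) * g (c k1)) = (\<Sum>x\<in>S. q k0 x * f x) * (\<Sum>x\<in>S. q k1 x * g x)"
proof -
  let ?\<phi> = "\<lambda>k x. (if k = k0 then f x else 1) * (if k = k1 then g x else 1)"
  have "E (\<lambda>c. f (c k0) * g (c k1)) = (\<Prod>k\<in>K. \<Sum>x\<in>S. q k x * ?\<phi> k x)"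
    using E_prod[of ?\<phi>] finite_K assms by (simp add: prod.distrib)
  also have "\<dots> = (\<Prod>k\<in>K. (if k = k0 then (\<Sum>x\<in>S. q k0 x * f x) else 1)
                        * (if k = k1 then (\<Sum>x\<in>S. q k1 x * g x) else 1))"
    by (rule prod.cong) (use assms(3) in \<open>simp_all add: q_sum\<close>)
  finally show ?thesis using finite_K assms by (simp add: prod.distrib)
qed

lemma E_cauchy_schwarz: "E (\<lambda>c. \<bar>Z c\<bar>) \<le> sqrt (E (\<lambda>c. (Z c)\<^sup>2))"
proof -
  define m where "m = E (\<lambda>c. \<bar>Z c\<bar>)"
  have expand: "(\<lambda>c. (\<bar>Z c\<bar> - m)\<^sup>2) = (\<lambda>c. (Z c)\<^sup>2 + ((- 2 * m) * \<bar>Z c\<bar> + m\<^sup>2))"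
    by (rule ext) (simp add: power2_eq_square algebra_simps)
  have "E (\<lambda>c. (\<bar>Z c\<bar> - m)\<^sup>2) = E (\<lambda>c. (Z c)\<^sup>2) + ((- 2 * m) * E (\<lambda>c. \<bar>Z c\<bar>) + m\<^sup>2)"
    unfolding expand E_add E_cmult E_const ..
  then have "E (\<lambda>c. (\<bar>Z c\<bar> - m)\<^sup>2) = E (\<lambda>c. (Z c)\<^sup>2) - m\<^sup>2"
    by (simp add: m_def[symmetric] power2_eq_square)
  moreover have "0 \<le> E (\<lambda>c. (\<bar>Z c\<bar> - m)\<^sup>2)"
    using E_mono[of "\<lambda>_. 0" "\<lambda>c. (\<bar>Z c\<bar> - m)\<^sup>2"] by simp
  ultimately have "m\<^sup>2 \<le> E (\<lambda>c. (Z c)\<^sup>2)" by simp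
  then show ?thesis unfolding m_def by (simp add: real_le_rsqrt)
qed

text \<open>The second moment of a sum of independent centred coordinates is the sum of the
  second moments: all cross terms vanish.\<close>
lemma E_square_sum_centered:
  assumes centered: "\<And>k. k \<in> K \<Longrightarrow> (\<Sum>x\<in>S. q k x * X k x) = 0"
  shows "E (\<lambda>c. (\<Sum>k\<in>K. X k (c k))\<^sup>2) = (\<Sum>k\<in>K. \<Sum>x\<in>S. q k x * (X k x)\<^sup>2)"
proof -
  have cross: "(\<Sum>l\<in>K. E (\<lambda>c. X k (c k) * X l (c l))) = (\<Sum>x\<in>S. q k x * (X k x)\<^sup>2)"
    if k: "k \<in> K" for k
  proof -
    have "E (\<lambda>c. X k (c k) * X l (c l)) = (if l = k then (\<Sum>x\<in>S. q k x * (X k x)\<^sup>2) else 0)"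
      if l: "l \<in> K" for l
      using E_single[OF k, of "\<lambda>x. (X k x)\<^sup>2"] E_pair[OF k l, of "X k" "X l"] centered[OF k]
      by (cases "l = k") (simp_all add: power2_eq_square)
    then show ?thesis using finite_K k by (simp cong: sum.cong)
  qed
  have "(\<lambda>c. (\<Sum>k\<in>K. X k (c k))\<^sup>2) = (\<lambda>c. \<Sum>k\<in>K. \<Sum>l\<in>K. X k (c k) * X l (c l))"
    by (simp add: power2_eq_square sum_product)
  then show ?thesis by (simp add: E_sum cross)
qed

lemma E_abs_deviation:
  "E (\<lambda>c. \<bar>(\<Sum>k\<in>K. A k (c k)) - (\<Sum>k\<in>K. \<Sum>x\<in>S. q k x * A k x)\<bar>)
     \<le> sqrt (\<Sum>k\<in>K. \<Sum>x\<in>S. q k x * (A k x)\<^sup>2)"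
proof -
  define a where "a k = (\<Sum>x\<in>S. q k x * A k x)" for k
  define X where "X k x = A k x - a k" for k x
  have centered: "(\<Sum>x\<in>S. q k x * X k x) = 0" if "k \<in> K" for k
    using that by (simp add: X_def a_def right_diff_distrib sum_subtractf
        sum_distrib_right[symmetric] q_sum)
  have variance: "(\<Sum>x\<in>S. q k x * (X k x)\<^sup>2) = (\<Sum>x\<in>S. q k x * (A k x)\<^sup>2) - (a k)\<^sup>2"
    if "k \<in> K" for k
  proof -
    have "(\<Sum>x\<in>S. q k x * (X k x)\<^sup>2)
        = (\<Sum>x\<in>S. q k x * (A k x)\<^sup>2) - 2 * a k * (\<Sum>x\<in>S. q k x * A k x)
          + (a k)\<^sup>2 * (\<Sum>x\<in>S. q k x)"
      unfolding X_def by (simp add: power2_eq_square algebra_simps sum.distrib sum_subtractf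
          sum_distrib_left)
    then show ?thesis using q_sum[OF that] by (simp add: a_def[symmetric] power2_eq_square)
  qed
  have "E (\<lambda>c. \<bar>(\<Sum>k\<in>K. A k (c k)) - (\<Sum>k\<in>K. a k)\<bar>) = E (\<lambda>c. \<bar>\<Sum>k\<in>K. X k (c k)\<bar>)"
    by (simp add: X_def sum_subtractf)
  also have "\<dots> \<le> sqrt (E (\<lambda>c. (\<Sum>k\<in>K. X k (c k))\<^sup>2))" by (rule E_cauchy_schwarz)
  also have "\<dots> \<le> sqrt (\<Sum>k\<in>K. \<Sum>x\<in>S. q k x * (A k x)\<^sup>2)"
    by (simp add: E_square_sum_centered centered variance sum_mono)
  finally show ?thesis by (simp add: a_def)
qed

text \<open>One-shot soft covering: the sum of independent nonnegative terms t k (c k) deviates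
  from its mean Qv by at most sqrt \<tau> Qv (from the terms truncated at \<tau> Qv, via
  Cauchy-Schwarz) plus twice the expected mass above the threshold, bounded by a power law.\<close>
lemma soft_covering:
  assumes t_nonneg: "\<And>k x. t k x \<ge> 0" and tau: "\<tau> > 0" and s: "s > 0"
    and mean: "Qv = (\<Sum>k\<in>K. \<Sum>x\<in>S. q k x * t k x)"
  shows "E (\<lambda>c. \<bar>(\<Sum>k\<in>K. t k (c k)) - Qv\<bar>)
        \<le> sqrt \<tau> * Qv + 2 * (\<Sum>k\<in>K. \<Sum>x\<in>S. q k x * t k x * (t k x / (\<tau> * Qv)) powr s)"
proof -
  define A where "A k x = (if t k x \<le> \<tau> * Qv then t k x else 0)" for k x
  define B where "B k x = t k x - A k x" for k x
  define b where "b k = (\<Sum>x\<in>S. q k x * B k x)" for k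
  define a where "a = (\<Sum>k\<in>K. \<Sum>x\<in>S. q k x * A k x)"
  have A_nonneg: "A k x \<ge> 0" and B_nonneg: "B k x \<ge> 0" for k x
    by (simp_all add: A_def B_def t_nonneg)
  have Qv_nonneg: "Qv \<ge> 0" unfolding mean by (intro sum_nonneg mult_nonneg_nonneg q_nonneg t_nonneg)
  have b_nonneg: "(\<Sum>k\<in>K. b k) \<ge> 0" unfolding b_def by (simp add: B_nonneg q_nonneg sum_nonneg)
  have Qv_split: "Qv = a + (\<Sum>k\<in>K. b k)"
    unfolding mean a_def b_def B_def
    by (simp add: algebra_simps sum.distrib[symmetric] sum_subtractf)
  have pointwise: "\<bar>(\<Sum>k\<in>K. t k (c k)) - Qv\<bar>
      \<le> \<bar>(\<Sum>k\<in>K. A k (c k)) - a\<bar> + ((\<Sum>k\<in>K. B k (c k)) + (\<Sum>k\<in>K. b k))" for c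
  proof -
    have "(\<Sum>k\<in>K. t k (c k)) - Qv
        = ((\<Sum>k\<in>K. A k (c k)) - a) + ((\<Sum>k\<in>K. B k (c k)) - (\<Sum>k\<in>K. b k))"
      unfolding Qv_split by (simp add: B_def sum_subtractf)
    then show ?thesis using b_nonneg sum_nonneg[of K "\<lambda>k. B k (c k)", OF B_nonneg] by linarith
  qed
  have dev: "E (\<lambda>c. \<bar>(\<Sum>k\<in>K. A k (c k)) - a\<bar>) \<le> sqrt \<tau> * Qv"
  proof -
    have "(\<Sum>k\<in>K. \<Sum>x\<in>S. q k x * (A k x)\<^sup>2) \<le> (\<Sum>k\<in>K. \<Sum>x\<in>S. \<tau> * Qv * (q k x * t k x))"
    proof (intro sum_mono)
      fix k x
      have "A k x \<le> \<tau> * Qv" "A k x \<le> t k x" "0 \<le> \<tau> * Qv"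
        using tau Qv_nonneg by (auto simp: A_def t_nonneg)
      then have "(A k x)\<^sup>2 \<le> \<tau> * Qv * t k x"
        unfolding power2_eq_square by (intro mult_mono) (simp_all add: A_nonneg t_nonneg)
      from mult_left_mono[OF this q_nonneg]
      show "q k x * (A k x)\<^sup>2 \<le> \<tau> * Qv * (q k x * t k x)" by (simp add: algebra_simps)
    qed
    also have "\<dots> = \<tau> * Qv\<^sup>2"
      unfolding sum_distrib_left[symmetric] mean[symmetric] by (simp add: power2_eq_square)
    finally have "sqrt (\<Sum>k\<in>K. \<Sum>x\<in>S. q k x * (A k x)\<^sup>2) \<le> sqrt (\<tau> * Qv\<^sup>2)"
      by (rule real_sqrt_le_mono)
    then have "sqrt (\<Sum>k\<in>K. \<Sum>x\<in>S. q k x * (A k x)\<^sup>2) \<le> sqrt \<tau> * Qv"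
      using Qv_nonneg by (simp add: real_sqrt_mult)
    with E_abs_deviation[of A] show ?thesis unfolding a_def by linarith
  qed
  have tail: "(\<Sum>k\<in>K. b k) \<le> (\<Sum>k\<in>K. \<Sum>x\<in>S. q k x * t k x * (t k x / (\<tau> * Qv)) powr s)"
    unfolding b_def
  proof (intro sum_mono)
    fix k x assume k: "k \<in> K" and x: "x \<in> S"
    show "q k x * B k x \<le> q k x * t k x * (t k x / (\<tau> * Qv)) powr s"
    proof (cases "q k x * t k x = 0")
      case True
      then show ?thesis by (auto simp: B_def A_def)
    next
      case False
      have "q k x * t k x \<le> (\<Sum>x\<in>S. q k x * t k x)"
        by (rule member_le_sum[OF x]) (simp_all add: q_nonneg t_nonneg finite_S)
      also have "\<dots> \<le> Qv"
        unfolding mean by (rule member_le_sum[OF k, where f="\<lambda>k. \<Sum>x\<in>S. q k x * t k x"])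
          (simp_all add: q_nonneg t_nonneg sum_nonneg finite_K)
      finally have "q k x * t k x \<le> Qv" .
      with False have "Qv > 0" using q_nonneg[of k x] t_nonneg[of k x]
        by (metis mult_nonneg_nonneg order.not_eq_order_implies_strict order.strict_trans2)
      then have "B k x \<le> t k x * (t k x / (\<tau> * Qv)) powr s"
        using truncation_tail_le[OF t_nonneg _ s, of "\<tau> * Qv" k x] tau
        unfolding B_def A_def by (simp split: if_splits)
      then show ?thesis using mult_left_mono[OF _ q_nonneg] by (simp add: mult.assoc)
    qed
  qed
  have "E (\<lambda>c. \<bar>(\<Sum>k\<in>K. t k (c k)) - Qv\<bar>)
      \<le> E (\<lambda>c. \<bar>(\<Sum>k\<in>K. A k (c k)) - a\<bar> + ((\<Sum>k\<in>K. B k (c k)) + (\<Sum>k\<in>K. b k)))"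
    by (rule E_mono[OF pointwise])
  also have "\<dots> = E (\<lambda>c. \<bar>(\<Sum>k\<in>K. A k (c k)) - a\<bar>) + 2 * (\<Sum>k\<in>K. b k)"
    by (simp add: E_add E_sum E_single b_def)
  finally show ?thesis using dev tail by linarith
qed

end

text \<open>Exponential moments at a small positive tilt: since the moment generating function
  has value 1 and derivative equal to the mean at 0, it exceeds exp (s mean) by at most
  a factor exp (s \<epsilon>) for some small s > 0.\<close>
lemma small_tilt_exponent:
  fixes p l :: "'i \<Rightarrow> real"
  assumes I: "finite I" and p_sum: "(\<Sum>i\<in>I. p i) = 1" and e: "\<epsilon> > 0"
  shows "\<exists>s>0. (\<Sum>i\<in>I. p i * exp (s * l i)) \<le> exp (s * ((\<Sum>i\<in>I. p i * l i) + \<epsilon>))"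
proof -
  define h where "h x = (\<Sum>i\<in>I. p i * exp (x * l i))" for x :: real
  define D where "D = (\<Sum>i\<in>I. p i * l i)"
  have h0: "h 0 = 1" unfolding h_def using p_sum by simp
  have "(h has_field_derivative D) (at 0)"
    unfolding h_def D_def by (auto intro!: derivative_eq_intros simp: mult.commute)
  then have "((\<lambda>y. (h y - h 0) / (y - 0)) \<longlongrightarrow> D) (at 0)"
    by (simp add: has_field_derivative_iff)
  then have "eventually (\<lambda>y. (h y - h 0) / (y - 0) < D + \<epsilon>) (at 0)"
    using e by (intro order_tendstoD(2)) auto
  then have "eventually (\<lambda>y. (h y - h 0) / (y - 0) < D + \<epsilon>) (at_right 0)"
    by (simp add: eventually_at_split)
  then obtain b where "b > 0" and b: "\<And>y. 0 < y \<Longrightarrow> y < b \<Longrightarrow> (h y - h 0) / (y - 0) < D + \<epsilon>"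
    unfolding eventually_at_right_field by auto
  define s where "s = b / 2"
  have s: "s > 0" and "(h s - 1) / s < D + \<epsilon>"
    using \<open>b > 0\<close> b[of s] h0 by (simp_all add: s_def)
  then have "h s \<le> 1 + s * (D + \<epsilon>)" by (simp add: field_simps)
  also have "\<dots> \<le> exp (s * (D + \<epsilon>))" by (rule exp_ge_add_one_self)
  finally show ?thesis using s unfolding h_def D_def by blast
qed

lemma exp_decay_tendsto_zero:
  fixes f :: "nat \<Rightarrow> real"
  assumes "\<gamma> > 0" and "\<And>n. 0 \<le> f n" and "\<And>n. f n \<le> K * 2 powr (- \<gamma> * real n)"
  shows "f \<longlonglongrightarrow> 0"
proof -
  have "(2::real) powr (- \<gamma>) < 1" using assms(1) by (simp add: powr_less_one)
  then have "(\<lambda>n. K * (2 powr (- \<gamma>)) ^ n) \<longlonglongrightarrow> 0"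
    by (intro tendsto_mult_right_zero LIMSEQ_power_zero) simp
  then have lim: "(\<lambda>n. K * 2 powr (- \<gamma> * real n)) \<longlonglongrightarrow> 0"
    by (simp add: powr_realpow[symmetric] powr_powr)
  show ?thesis
    by (rule tendsto_sandwich[of "\<lambda>_. 0" f sequentially "\<lambda>n. K * 2 powr (- \<gamma> * real n)"])
      (use assms lim in \<open>auto intro: always_eventually\<close>)
qed

lemma num_cw_ge: "real (num_cw R n) \<ge> 2 powr (real n * R)"
  unfolding num_cw_def using le_of_int_ceiling[of "2 powr (real n * R)"] by linarith

lemma num_cw_pos: "num_cw R n \<ge> 1"
  using num_cw_ge[of n R] powr_gt_zero[of 2 "real n * R"] by linarith

definition cw_prob :: "('w \<Rightarrow> 'u \<Rightarrow> real) \<Rightarrow> nat \<Rightarrow> 'w list \<Rightarrow> 'u list \<Rightarrow> real" where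
  "cw_prob PUW n ws us = (\<Prod>t<n. PUW (ws ! t) (us ! t))"

definition cw_out :: "('w \<Rightarrow> real) \<Rightarrow> ('w \<Rightarrow> 'u \<Rightarrow> 'v \<Rightarrow> real) \<Rightarrow> nat \<Rightarrow> nat
    \<Rightarrow> 'w list \<Rightarrow> 'u list \<Rightarrow> 'v list \<Rightarrow> real" where
  "cw_out PW PV n M ws us vs =
     (\<Prod>t<n. PW (ws ! t)) * (1 / real M * (\<Prod>t<n. PV (ws ! t) (us ! t) (vs ! t)))"

definition tilt_moment :: "('w::finite \<Rightarrow> real) \<Rightarrow> ('w \<Rightarrow> 'u::finite \<Rightarrow> real)
    \<Rightarrow> ('w \<Rightarrow> 'u \<Rightarrow> 'v::finite \<Rightarrow> real) \<Rightarrow> real \<Rightarrow> real" where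
  "tilt_moment PW PUW PV s = (\<Sum>w\<in>UNIV. \<Sum>u\<in>UNIV. \<Sum>v\<in>UNIV.
      PW w * PUW w u * PV w u v * (PW w * PV w u v / out_marg PW PUW PV v) powr s)"

definition tilt_exponent :: "('w::finite \<Rightarrow> real) \<Rightarrow> ('w \<Rightarrow> 'u::finite \<Rightarrow> real)
    \<Rightarrow> ('w \<Rightarrow> 'u \<Rightarrow> 'v::finite \<Rightarrow> real) \<Rightarrow> 'w \<Rightarrow> 'u \<Rightarrow> 'v \<Rightarrow> real" where
  "tilt_exponent PW PUW PV w u v =
     (if PW w * PUW w u * PV w u v = 0 then 0
      else ln (PW w * PV w u v / out_marg PW PUW PV v))"

locale superposition_code =
  fixes PW :: "'w::finite \<Rightarrow> real"
    and PUW :: "'w \<Rightarrow> 'u::finite \<Rightarrow> real"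
    and PV :: "'w \<Rightarrow> 'u \<Rightarrow> 'v::finite \<Rightarrow> real"
  assumes PW_nonneg: "\<And>w. PW w \<ge> 0"
    and PW_sum: "(\<Sum>w\<in>UNIV. PW w) = 1"
    and PUW_nonneg: "\<And>w u. PUW w u \<ge> 0"
    and PUW_sum: "\<And>w. (\<Sum>u\<in>UNIV. PUW w u) = 1"
    and PV_nonneg: "\<And>w u v. PV w u v \<ge> 0"
    and PV_sum: "\<And>w u. (\<Sum>v\<in>UNIV. PV w u v) = 1"
begin

abbreviation PVm :: "'v \<Rightarrow> real" where "PVm \<equiv> out_marg PW PUW PV"

lemma out_marg_sum: "(\<Sum>v\<in>UNIV. PVm v) = 1"
proof -
  have "(\<Sum>v\<in>UNIV. PVm v) = (\<Sum>w\<in>UNIV. \<Sum>u\<in>UNIV. PW w * PUW w u * (\<Sum>v\<in>UNIV. PV w u v))"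
    unfolding out_marg_def by (simp add: sum_distrib_left sum.swap[of _ "UNIV :: 'v set"])
  also have "\<dots> = 1" by (simp add: PV_sum sum_distrib_left[symmetric] PUW_sum PW_sum)
  finally show ?thesis .
qed

lemma codebook_prod_space:
  "prod_space (seqs n \<times> {1..M} :: ('w list \<times> nat) set) (seqs n :: 'u list set)
     (\<lambda>k. cw_prob PUW n (fst k))"
  by unfold_locales
    (simp_all add: finite_cartesian_product cw_prob_def prod_nonneg PUW_nonneg PUW_sum
      sum_seqs_prod[where f="\<lambda>t. PUW (_ ! t)"])

lemma mean_cw_out:
  assumes "M \<ge> 1"
  shows "(\<Prod>t<n. PVm (vs ! t)) = (\<Sum>k\<in>seqs n \<times> {1..M}. \<Sum>us\<in>seqs n.
           cw_prob PUW n (fst k) us * cw_out PW PV n M (fst k) us vs)"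
proof -
  have "(\<Sum>k\<in>seqs n \<times> {1..M}. \<Sum>us\<in>seqs n. cw_prob PUW n (fst k) us * cw_out PW PV n M (fst k) us vs)
      = (\<Sum>ws\<in>seqs n. \<Sum>j\<in>{1..M}. 1 / real M * (\<Sum>us\<in>seqs n.
            \<Prod>t<n. PW (ws ! t) * (PUW (ws ! t) (us ! t) * PV (ws ! t) (us ! t) (vs ! t))))"
    unfolding sum.cartesian_product' cw_prob_def cw_out_def
    by (simp add: sum_distrib_left prod.distrib algebra_simps)
  also have "\<dots> = (\<Sum>ws\<in>seqs n. \<Prod>t<n. PW (ws ! t) *
                    (\<Sum>u\<in>UNIV. PUW (ws ! t) u * PV (ws ! t) u (vs ! t)))"
  proof -
    have "(\<Sum>us\<in>seqs n. \<Prod>t<n. PW (ws ! t) * (PUW (ws ! t) (us ! t) * PV (ws ! t) (us ! t) (vs ! t)))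
        = (\<Prod>t<n. PW (ws ! t) * (\<Sum>u\<in>UNIV. PUW (ws ! t) u * PV (ws ! t) u (vs ! t)))" for ws
      using sum_seqs_prod[of "\<lambda>t u. PW (ws ! t) * (PUW (ws ! t) u * PV (ws ! t) u (vs ! t))" n]
      by (simp add: sum_distrib_left)
    then show ?thesis using assms by simp
  qed
  also have "\<dots> = (\<Prod>t<n. PVm (vs ! t))"
    using sum_seqs_prod[of "\<lambda>t w. PW w * (\<Sum>u\<in>UNIV. PUW w u * PV w u (vs ! t))" n]
    by (simp add: out_marg_def sum_distrib_left mult.assoc)
  finally show ?thesis by simp
qed

lemma expected_tv_as_prod_expect:
  fixes R :: real and n :: nat
  defines "M \<equiv> num_cw R n"
  shows "expected_tv PW PUW PV R n = 1/2 * (\<Sum>vs\<in>seqs n.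
           prod_expect (seqs n \<times> {1..M}) (seqs n) (\<lambda>k. cw_prob PUW n (fst k))
             (\<lambda>c. \<bar>(\<Sum>k\<in>seqs n \<times> {1..M}. cw_out PW PV n M (fst k) (c k) vs)
                  - (\<Prod>t<n. PVm (vs ! t))\<bar>))"
proof -
  define K where "K = (seqs n :: 'w list set) \<times> {1..M}"
  have prob: "codebook_prob PUW n M c = (\<Prod>k\<in>K. cw_prob PUW n (fst k) (c k))" for c
    unfolding codebook_prob_def K_def cw_prob_def by (simp add: case_prod_unfold)
  have out: "induced_out PW PV n M c vs = (\<Sum>k\<in>K. cw_out PW PV n M (fst k) (c k) vs)" for c vs
    unfolding induced_out_def K_def cw_out_def sum.cartesian_product' by (simp add: sum_distrib_left)
  show ?thesis
    unfolding expected_tv_def Let_def M_def[symmetric] codebooks_def prob out tv_dist_def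
      prod_expect_def K_def[symmetric]
    by (simp add: sum_distrib_left sum.swap[of _ "PiE K (\<lambda>_. seqs n)"] algebra_simps)
qed

lemma tail_term_eq:
  fixes s :: real
  assumes tau: "\<tau> > 0" and M: "M \<ge> 1"
  defines "F w u v \<equiv> PW w * PUW w u * PV w u v * (PW w * PV w u v / PVm v) powr s"
  shows "cw_prob PUW n ws us * cw_out PW PV n M ws us vs
           * (cw_out PW PV n M ws us vs / (\<tau> * (\<Prod>t<n. PVm (vs ! t)))) powr s
       = (\<tau> * real M) powr (-s) * (1 / real M) * (\<Prod>t<n. F (ws ! t) (us ! t) (vs ! t))"
proof -
  define a where "a = (\<Prod>t<n. PW (ws ! t))"
  define b where "b = (\<Prod>t<n. PV (ws ! t) (us ! t) (vs ! t))"
  define Q where "Q = (\<Prod>t<n. PVm (vs ! t))"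
  have a_nonneg: "a \<ge> 0" and b_nonneg: "b \<ge> 0"
    unfolding a_def b_def by (simp_all add: prod_nonneg PW_nonneg PV_nonneg)
  have "(\<Prod>t<n. PW (ws ! t) * PV (ws ! t) (us ! t) (vs ! t) / PVm (vs ! t)) = a * b / Q"
    unfolding a_def b_def Q_def by (simp add: prod_dividef prod.distrib)
  then have "(\<Prod>t<n. F (ws ! t) (us ! t) (vs ! t)) = a * cw_prob PUW n ws us * b * (a * b / Q) powr s"
    unfolding F_def prod.distrib prod_powr_distrib[symmetric] a_def b_def cw_prob_def
    by (simp add: prod_nonneg PW_nonneg PV_nonneg)
  moreover have "cw_out PW PV n M ws us vs = a * b / real M"
    unfolding cw_out_def a_def b_def by simp
  moreover have "(a * b / real M / (\<tau> * Q)) powr s = (a * b / Q) powr s / (\<tau> * real M) powr s"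
    using tau M a_nonneg b_nonneg by (simp add: powr_divide powr_mult field_simps)
  ultimately show ?thesis unfolding Q_def[symmetric]
    by (simp add: powr_minus divide_inverse)
qed

lemma tail_sum_eq:
  assumes tau: "\<tau> > 0" and M: "M \<ge> 1"
  shows "(\<Sum>vs\<in>seqs n. \<Sum>k\<in>seqs n \<times> {1..M}. \<Sum>us\<in>seqs n.
            cw_prob PUW n (fst k) us * cw_out PW PV n M (fst k) us vs
            * (cw_out PW PV n M (fst k) us vs / (\<tau> * (\<Prod>t<n. PVm (vs ! t)))) powr s)
       = (\<tau> * real M) powr (-s) * tilt_moment PW PUW PV s ^ n"
proof -
  define F where "F w u v = PW w * PUW w u * PV w u v * (PW w * PV w u v / PVm v) powr s" for w u v
  have "(\<Sum>vs\<in>seqs n. \<Sum>ws\<in>seqs n. \<Sum>us\<in>seqs n. \<Prod>t<n. F (ws ! t) (us ! t) (vs ! t))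
      = (\<Sum>vs\<in>seqs n. \<Sum>ws\<in>seqs n. \<Prod>t<n. \<Sum>u\<in>UNIV. F (ws ! t) u (vs ! t))"
    by (intro sum.cong refl sum_seqs_prod)
  also have "\<dots> = (\<Sum>vs\<in>seqs n. \<Prod>t<n. \<Sum>w\<in>UNIV. \<Sum>u\<in>UNIV. F w u (vs ! t))"
    by (intro sum.cong refl sum_seqs_prod)
  also have "\<dots> = (\<Sum>v\<in>UNIV. \<Sum>w\<in>UNIV. \<Sum>u\<in>UNIV. F w u v) ^ n"
    by (subst sum_seqs_prod) simp
  also have "(\<Sum>v\<in>UNIV. \<Sum>w\<in>UNIV. \<Sum>u\<in>UNIV. F w u v) = tilt_moment PW PUW PV s"
    unfolding tilt_moment_def F_def by (simp add: sum.swap[of _ "UNIV :: 'v set"])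
  finally have "(\<Sum>vs\<in>seqs n. \<Sum>ws\<in>seqs n. \<Sum>us\<in>seqs n. \<Prod>t<n. F (ws ! t) (us ! t) (vs ! t))
      = tilt_moment PW PUW PV s ^ n" .
  then show ?thesis
    unfolding tail_term_eq[OF tau M] F_def[symmetric] sum.cartesian_product'
    using M by (simp add: sum_distrib_left[symmetric] sum_divide_distrib[symmetric])
qed

lemma expected_tv_le:
  assumes tau: "\<tau> > 0" and s: "s > 0"
  shows "expected_tv PW PUW PV R n
     \<le> 1/2 * sqrt \<tau> + (\<tau> * real (num_cw R n)) powr (-s) * tilt_moment PW PUW PV s ^ n"
proof -
  define M where "M = num_cw R n"
  have M: "M \<ge> 1" unfolding M_def by (rule num_cw_pos)
  define Q where "Q vs = (\<Prod>t<n. PVm (vs ! t))" for vs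
  define tail where "tail vs = (\<Sum>k\<in>seqs n \<times> {1..M}. \<Sum>us\<in>seqs n.
      cw_prob PUW n (fst k) us * cw_out PW PV n M (fst k) us vs
      * (cw_out PW PV n M (fst k) us vs / (\<tau> * Q vs)) powr s)" for vs
  interpret codebook: prod_space "seqs n \<times> {1..M}" "seqs n" "\<lambda>k. cw_prob PUW n (fst k)"
    by (rule codebook_prod_space)
  have Q_sum: "(\<Sum>vs\<in>seqs n. Q vs) = 1"
    unfolding Q_def by (simp add: sum_seqs_prod[where f="\<lambda>t. PVm"] out_marg_sum)
  have "expected_tv PW PUW PV R n = 1/2 * (\<Sum>vs\<in>seqs n. codebook.E
          (\<lambda>c. \<bar>(\<Sum>k\<in>seqs n \<times> {1..M}. cw_out PW PV n M (fst k) (c k) vs) - Q vs\<bar>))"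
    unfolding M_def Q_def by (rule expected_tv_as_prod_expect)
  also have "\<dots> \<le> 1/2 * (\<Sum>vs\<in>seqs n. sqrt \<tau> * Q vs + 2 * tail vs)"
    unfolding tail_def
    by (intro mult_left_mono sum_mono codebook.soft_covering tau s)
      (simp_all add: cw_out_def prod_nonneg PW_nonneg PV_nonneg Q_def mean_cw_out[OF M])
  also have "\<dots> = 1/2 * sqrt \<tau> + (\<Sum>vs\<in>seqs n. tail vs)"
    by (simp add: sum.distrib sum_distrib_left[symmetric] Q_sum)
  also have "(\<Sum>vs\<in>seqs n. tail vs) = (\<tau> * real M) powr (-s) * tilt_moment PW PUW PV s ^ n"
    unfolding tail_def Q_def by (rule tail_sum_eq[OF tau M])
  finally show ?thesis unfolding M_def .
qed

lemma joint_pos: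
  assumes "PW w * PUW w u * PV w u v \<noteq> 0"
  shows "PW w > 0" "PUW w u > 0" "PV w u v > 0" "PVm v > 0"
proof -
  show "PW w > 0" "PUW w u > 0" "PV w u v > 0"
    using assms PW_nonneg[of w] PUW_nonneg[of w u] PV_nonneg[of w u v] by (auto simp: less_le)
  then have "0 < PW w * PUW w u * PV w u v" by simp
  also have "\<dots> \<le> (\<Sum>u\<in>UNIV. PW w * PUW w u * PV w u v)"
    by (rule member_le_sum) (auto simp: PW_nonneg PUW_nonneg PV_nonneg)
  also have "\<dots> \<le> PVm v"
    unfolding out_marg_def
    by (rule member_le_sum[where f="\<lambda>w. \<Sum>u\<in>UNIV. PW w * PUW w u * PV w u v"])
      (auto simp: PW_nonneg PUW_nonneg PV_nonneg sum_nonneg)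
  finally show "PVm v > 0" .
qed

lemma tilt_moment_as_exp:
  "tilt_moment PW PUW PV s = (\<Sum>w\<in>UNIV. \<Sum>u\<in>UNIV. \<Sum>v\<in>UNIV.
     PW w * PUW w u * PV w u v * exp (s * tilt_exponent PW PUW PV w u v))"
  unfolding tilt_moment_def
proof (intro sum.cong refl)
  fix w u v
  show "PW w * PUW w u * PV w u v * (PW w * PV w u v / PVm v) powr s
      = PW w * PUW w u * PV w u v * exp (s * tilt_exponent PW PUW PV w u v)"
    using joint_pos[of w u v] by (cases "PW w * PUW w u * PV w u v = 0")
      (simp_all add: tilt_exponent_def powr_def mult.commute)
qed

text \<open>The mean of tilt_exponent is ln 2 (I(W,U;V) - H(W)): the log-ratio splits into
  ln(Phi_{V|W,U} / Phi_V), whose mean is the mutual information, and ln Phi_W.\<close>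
lemma mean_tilt_exponent:
  "(\<Sum>w\<in>UNIV. \<Sum>u\<in>UNIV. \<Sum>v\<in>UNIV. PW w * PUW w u * PV w u v * tilt_exponent PW PUW PV w u v)
     = ln 2 * (mutual_info_WU_V PW PUW PV - entropy_bits PW)"
proof -
  define L where "L w = (if PW w = 0 then 0 else PW w * ln (PW w))" for w
  have summand: "PW w * PUW w u * PV w u v * tilt_exponent PW PUW PV w u v
      = ln 2 * xlog2 (PW w * PUW w u * PV w u v)
                  (PW w * PUW w u * PV w u v / (PW w * PUW w u * PVm v))
        + L w * PUW w u * PV w u v" for w u v
  proof (cases "PW w * PUW w u * PV w u v = 0")
    case True
    then show ?thesis by (auto simp: tilt_exponent_def L_def xlog2_def)
  next
    case False
    note pos = joint_pos[OF False]
    have "ln (PW w * PV w u v / PVm v) = ln (PW w) + ln (PV w u v / PVm v)"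
      using pos ln_mult[of "PW w" "PV w u v / PVm v"] by simp
    then show ?thesis using False pos
      by (simp add: tilt_exponent_def L_def xlog2_def log_def field_simps)
  qed
  have "(\<Sum>w\<in>UNIV. \<Sum>u\<in>UNIV. \<Sum>v\<in>UNIV. L w * PUW w u * PV w u v) = (\<Sum>w\<in>UNIV. L w)"
    by (simp add: sum_distrib_left[symmetric] mult.assoc PV_sum PUW_sum)
  also have "\<dots> = - ln 2 * entropy_bits PW"
    unfolding entropy_bits_def L_def xlog2_def
    by (simp add: sum_distrib_left sum_negf[symmetric], intro sum.cong refl) (simp add: log_def)
  finally show ?thesis
    unfolding summand mutual_info_WU_V_def by (simp add: sum.distrib sum_distrib_left algebra_simps)
qed

lemma tilt_moment_bound:
  assumes e: "\<epsilon> > 0"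
  shows "\<exists>s>0. tilt_moment PW PUW PV s
                \<le> 2 powr (s * (mutual_info_WU_V PW PUW PV - entropy_bits PW + \<epsilon>))"
proof -
  define p where "p = (\<lambda>(w, u, v). PW w * PUW w u * PV w u v)"
  define l where "l = (\<lambda>(w, u, v). tilt_exponent PW PUW PV w u v)"
  let ?I = "UNIV \<times> UNIV \<times> UNIV :: ('w \<times> 'u \<times> 'v) set"
  have triple: "(\<Sum>i\<in>?I. f i) = (\<Sum>w\<in>UNIV. \<Sum>u\<in>UNIV. \<Sum>v\<in>UNIV. f (w, u, v))"
    for f :: "'w \<times> 'u \<times> 'v \<Rightarrow> real"
    by (simp only: sum.cartesian_product')
  have "(\<Sum>i\<in>?I. p i) = 1"
    unfolding triple p_def
    by (simp add: sum_distrib_left[symmetric] mult.assoc PV_sum PUW_sum PW_sum)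
  then obtain s where s: "s > 0"
    and sb: "(\<Sum>i\<in>?I. p i * exp (s * l i)) \<le> exp (s * ((\<Sum>i\<in>?I. p i * l i) + \<epsilon> * ln 2))"
    using small_tilt_exponent[of ?I p "\<epsilon> * ln 2" l] e by auto
  have "tilt_moment PW PUW PV s
      \<le> exp (s * (ln 2 * (mutual_info_WU_V PW PUW PV - entropy_bits PW) + \<epsilon> * ln 2))"
    using sb unfolding triple p_def l_def by (simp add: tilt_moment_as_exp mean_tilt_exponent)
  also have "\<dots> = 2 powr (s * (mutual_info_WU_V PW PUW PV - entropy_bits PW + \<epsilon>))"
    by (simp add: powr_def algebra_simps)
  finally show ?thesis using s by blast
qed

lemma expected_tv_nonneg: "expected_tv PW PUW PV R n \<ge> 0"
  unfolding expected_tv_def Let_def codebook_prob_def tv_dist_def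
  by (intro sum_nonneg mult_nonneg_nonneg prod_nonneg)
    (auto simp: PUW_nonneg case_prod_unfold prod_nonneg)

text \<open>Choosing the truncation level \<tau> = 2^(-n \<epsilon>) in the soft-covering bound, both terms
  decay exponentially once the tilted moment is controlled at a rate 2 \<epsilon> below R.\<close>
lemma expected_tv_two_exponentials:
  assumes e: "\<epsilon> > 0" and s: "s > 0"
    and tilt: "tilt_moment PW PUW PV s \<le> 2 powr (s * (R - 2 * \<epsilon>))"
  shows "expected_tv PW PUW PV R n \<le> 2 powr (- (\<epsilon> / 2) * real n) + 2 powr (- (s * \<epsilon>) * real n)"
proof -
  define \<tau> where "\<tau> = 2 powr (- real n * \<epsilon>)"
  define M where "M = real (num_cw R n)"
  have tau: "\<tau> > 0" unfolding \<tau>_def by simp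
  have g_nonneg: "tilt_moment PW PUW PV s \<ge> 0"
    unfolding tilt_moment_def by (intro sum_nonneg mult_nonneg_nonneg)
      (simp_all add: PW_nonneg PUW_nonneg PV_nonneg)
  have "sqrt \<tau> = 2 powr (- (\<epsilon> / 2) * real n)"
    unfolding \<tau>_def by (simp add: powr_half_sqrt[symmetric] powr_powr algebra_simps)
  then have first: "1/2 * sqrt \<tau> \<le> 2 powr (- (\<epsilon> / 2) * real n)" by simp
  have "(\<tau> * M) powr (-s) \<le> (\<tau> * 2 powr (real n * R)) powr (-s)"
    unfolding M_def by (rule powr_mono2') (use s tau num_cw_ge in auto)
  also have "\<dots> = 2 powr (- s * real n * (R - \<epsilon>))"
    unfolding \<tau>_def by (simp add: powr_add[symmetric] powr_powr algebra_simps)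
  finally have "(\<tau> * M) powr (-s) * tilt_moment PW PUW PV s ^ n
      \<le> 2 powr (- s * real n * (R - \<epsilon>)) * (2 powr (s * (R - 2 * \<epsilon>))) ^ n"
    by (intro mult_mono power_mono tilt g_nonneg) (simp_all add: g_nonneg)
  also have "\<dots> = 2 powr (- (s * \<epsilon>) * real n)"
    by (simp add: powr_realpow[symmetric] powr_powr powr_add[symmetric] algebra_simps)
  finally have second: "(\<tau> * M) powr (-s) * tilt_moment PW PUW PV s ^ n \<le> 2 powr (- (s * \<epsilon>) * real n)" .
  show ?thesis using expected_tv_le[OF tau s, of R n] first second unfolding M_def by linarith
qed

text \<open>Exponential decay at a rate above I(W,U;V) - H(W): split the excess rate into thirds,
  one for the tilted moment and one for the truncation level.\<close>
lemma expected_tv_exp_bound: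
  assumes rate: "R > mutual_info_WU_V PW PUW PV - entropy_bits PW"
  shows "\<exists>\<gamma>>0. \<forall>n. expected_tv PW PUW PV R n \<le> 2 * 2 powr (- \<gamma> * real n)"
proof -
  define \<epsilon> where "\<epsilon> = (R - (mutual_info_WU_V PW PUW PV - entropy_bits PW)) / 3"
  have e: "\<epsilon> > 0" using rate unfolding \<epsilon>_def by simp
  obtain s where s: "s > 0" and "tilt_moment PW PUW PV s
      \<le> 2 powr (s * (mutual_info_WU_V PW PUW PV - entropy_bits PW + \<epsilon>))"
    using tilt_moment_bound[OF e] by blast
  moreover have "mutual_info_WU_V PW PUW PV - entropy_bits PW + \<epsilon> = R - 2 * \<epsilon>"
    unfolding \<epsilon>_def by (simp add: field_simps)
  ultimately have tilt: "tilt_moment PW PUW PV s \<le> 2 powr (s * (R - 2 * \<epsilon>))" by simp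
  define \<gamma> where "\<gamma> = min (\<epsilon> / 2) (s * \<epsilon>)"
  have "expected_tv PW PUW PV R n \<le> 2 * 2 powr (- \<gamma> * real n)" for n
  proof -
    have "\<gamma> * real n \<le> \<epsilon> / 2 * real n" "\<gamma> * real n \<le> s * \<epsilon> * real n"
      by (intro mult_right_mono; simp add: \<gamma>_def)+
    then have "2 powr (- (\<epsilon> / 2) * real n) \<le> 2 powr (- \<gamma> * real n)"
      and "2 powr (- (s * \<epsilon>) * real n) \<le> 2 powr (- \<gamma> * real n)"
      by (simp_all add: powr_mono)
    then show ?thesis using expected_tv_two_exponentials[OF e s tilt, of n] by linarith
  qed
  moreover have "\<gamma> > 0" using e s unfolding \<gamma>_def by simp
  ultimately show ?thesis by blast
qed

end

theorem mainTheorem13: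
  fixes PW :: "'w::finite \<Rightarrow> real"
    and PUW :: "'w \<Rightarrow> 'u::finite \<Rightarrow> real"
    and PV :: "'w \<Rightarrow> 'u \<Rightarrow> 'v::finite \<Rightarrow> real"
    and R :: real
  assumes PW_nonneg: "\<And>w. PW w \<ge> 0"
    and PW_sum: "(\<Sum>w\<in>UNIV. PW w) = 1"
    and PUW_nonneg: "\<And>w u. PUW w u \<ge> 0"
    and PUW_sum: "\<And>w. (\<Sum>u\<in>UNIV. PUW w u) = 1"
    and PV_nonneg: "\<And>w u v. PV w u v \<ge> 0"
    and PV_sum: "\<And>w u. (\<Sum>v\<in>UNIV. PV w u v) = 1"
    and rate: "R > mutual_info_WU_V PW PUW PV - entropy_bits PW"
  shows "(expected_tv PW PUW PV R \<longlongrightarrow> 0) sequentially \<and>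
         (\<exists>\<gamma>>0. \<exists>K. \<forall>n. expected_tv PW PUW PV R n \<le> K * 2 powr (- \<gamma> * real n))"
proof -
  interpret superposition_code PW PUW PV
    by unfold_locales (fact PW_nonneg PW_sum PUW_nonneg PUW_sum PV_nonneg PV_sum)+
  obtain \<gamma> where "\<gamma> > 0" and bound: "\<And>n. expected_tv PW PUW PV R n \<le> 2 * 2 powr (- \<gamma> * real n)"
    using expected_tv_exp_bound[OF rate] by blast
  have "expected_tv PW PUW PV R \<longlonglongrightarrow> 0"
    by (rule exp_decay_tendsto_zero[OF \<open>\<gamma> > 0\<close> expected_tv_nonneg bound])
  then show ?thesis using \<open>\<gamma> > 0\<close> bound by blast
qed

end
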